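(* Let $\mathcal P_s$ be the strong-identification parameter space defined below. Then $\inf_{(\theta,F)\in\mathcal P_s}\tau_{\min}(A_F)>0$, where $\tau_{\min}(A_F)$ denotes the smallest singular value of $A_F$.
   Context: General MTE setup. Observables are $(Y,D,Z)$ with $Y\in\mathbb R$, $D\in\{0,1\}$, $Z$ discrete with support $\{z_0,\dots,z_K\}$. Fix an integer $M\ge1$ and known continuous functions $h_1,\dots,h_M$ on $(0,1)$; set $\lambda_{10}=\lambda_{00}\equiv1$ and for $m=1,\dots,M$, $p\in(0,1)$: $\lambda_{1m}(p)=\frac1p\int_0^p h_m(u)du$, $\lambda_{0m}(p)=\frac1{1-p}\int_p^1 h_m(u)du$. For $p=(p(z_0),\dots,p(z_K))'\in(0,1)^{K+1}$ let $A_d(p)$ be the $(K+1)\times(M+1)$ matrix with $(\ell,m)$ entry $\lambda_{dm}(p(z_\ell))$ ($\ell=0,\dots,K$; $m=0,\dots,M$), and $A(p)=\mathrm{diag}(A_1(p),A_0(p))\in\mathbb R^{2(K+1)\times 2(M+1)}$. Parameters: $\theta=(\theta_1',\theta_0')'$, $\theta_d=(\theta_{d0},\dots,\theta_{dM})'=(\mu_d,\rho_{d1},\dots,\rho_{dM})'$. For a distribution $F$ of $(Y,D,Z)$: $q_F(z_\ell)=P_F(Z=z_\ell)$, $p_F(z_\ell)=P_F(D=1\mid Z=z_\ell)$, $p_F=(p_F(z_0),\dots,p_F(z_K))'$, $\beta_{F,d\ell}=E_F[Y\mid D=d,Z=z_\ell]$, $\beta_{F,d}=(\beta_{F,d0},\dots,\beta_{F,dK})'$,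 $\beta_F=(\beta_{F,1}',\beta_{F,0}')'$, $\sigma^2_{F,d\ell}=\mathrm{Var}_F(Y\mid D=d,Z=z_\ell)$, $A_F=A(p_F)$. Parameter space: fix $\delta,\zeta>0$, $\epsilon\in(0,1/2)$ and a compact $\Theta\subset\mathbb R^{2(M+1)}$ with nonempty interior. $\mathcal P$ is the set of pairs $(\theta,F)$ such that (i) $K\ge M$, $\theta\in\mathrm{int}(\Theta)$ and $A_F\theta=\beta_F$; (ii) $\sup_{d\in\{0,1\}}\sup_{\ell}E_F[|Y|^{2+\delta}\mid D=d,Z=z_\ell]\le\zeta$; (iii) $\epsilon\le p_F(z_\ell)\le 1-\epsilon$ for all $\ell$; (iv) $\epsilon\le q_F(z_\ell)\le1-\epsilon$ for all $\ell$; (v) $\sigma^2_{F,d\ell}\ge\epsilon$ for all $d,\ell$. Strong-identification parameter space: $\mathcal P_s$ is the set of $(\theta,F)\in\mathcal P$ (same $\delta,\zeta,\epsilon$) such that the families $\{\lambda_{1m}\}_{m=0}^M$ and $\{\lambda_{0m}\}_{m=0}^M$ are each unisolvent on $(0,1)$ (a set of $n$ functions $f_1,\dots,f_n$ is unisolvent on $\Omega$ if for any $n$ distinct points $x_1,\dots,x_n\in\Omega$ the matrix $(f_i(x_j))$ has nonzero determinant), and there exists an index set $\mathcal S\subseteq\{0,\dots,K\}$ with $|\mathcal S|=M+1$ and $\min_{j,k\in\mathcal S,j\ne k}|p_F(z_j)-p_F(z_k)|\ge\epsilon$. *)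

theory Defs
  imports "HOL-Probability.Probability_Measure" "Jordan_Normal_Form.Char_Poly"
begin

definition sing_min :: "real mat \<Rightarrow> real" where
  "sing_min A = sqrt (Min {k. eigenvalue (transpose_mat A * A) k})"

definition unisolvent :: "(nat \<Rightarrow> real \<Rightarrow> real) \<Rightarrow> nat \<Rightarrow> real set \<Rightarrow> bool" where
  "unisolvent f n \<Omega> \<longleftrightarrow>
     (\<forall>x :: nat \<Rightarrow> real. (\<forall>j<n. x j \<in> \<Omega>) \<and> inj_on x {..<n} \<longrightarrow>
        det (mat n n (\<lambda>(i, j). f i (x j))) \<noteq> 0)"

text \<open>d = True corresponds to D = 1, d = False to D = 0.\<close>
definition lam :: "(nat \<Rightarrow> real \<Rightarrow> real) \<Rightarrow> bool \<Rightarrow> nat \<Rightarrow> real \<Rightarrow> real" where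
  "lam h d m p =
     (if m = 0 then 1
      else if d then (1 / p) * integral {0..p} (h m)
      else (1 / (1 - p)) * integral {p..1} (h m))"

text \<open>A(p) = diag(A_1(p), A_0(p)), a 2(K+1) x 2(M+1) real matrix; p is indexed by 0..K.\<close>
definition Amat :: "(nat \<Rightarrow> real \<Rightarrow> real) \<Rightarrow> nat \<Rightarrow> nat \<Rightarrow> (nat \<Rightarrow> real) \<Rightarrow> real mat" where
  "Amat h K M p = mat (2 * (K + 1)) (2 * (M + 1)) (\<lambda>(r, c).
      if r < K + 1 \<and> c < M + 1 then lam h True c (p r)
      else if K + 1 \<le> r \<and> M + 1 \<le> c then lam h False (c - (M + 1)) (p (r - (K + 1)))
      else 0)"

text \<open>A distribution F of (Y,D,Z) is a probability measure on real x bool x nat; the support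
  point z_l of Z is encoded by its index l (l = 0..K).\<close>

definition obsY :: "real \<times> bool \<times> nat \<Rightarrow> real" where "obsY w = fst w"
definition obsD :: "real \<times> bool \<times> nat \<Rightarrow> bool" where "obsD w = fst (snd w)"
definition obsZ :: "real \<times> bool \<times> nat \<Rightarrow> nat" where "obsZ w = snd (snd w)"

definition cellZ :: "(real \<times> bool \<times> nat) measure \<Rightarrow> nat \<Rightarrow> (real \<times> bool \<times> nat) set" where
  "cellZ F l = {w \<in> space F. obsZ w = l}"

definition cellDZ :: "(real \<times> bool \<times> nat) measure \<Rightarrow> bool \<Rightarrow> nat \<Rightarrow> (real \<times> bool \<times> nat) set" where
  "cellDZ F d l = {w \<in> space F. obsD w = d \<and> obsZ w = l}"

definition qF :: "(real \<times> bool \<times> nat) measure \<Rightarrow> nat \<Rightarrow> real" where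
  "qF F l = measure F (cellZ F l)"

definition pF :: "(real \<times> bool \<times> nat) measure \<Rightarrow> nat \<Rightarrow> real" where
  "pF F l = measure F (cellDZ F True l) / measure F (cellZ F l)"

definition betaF :: "(real \<times> bool \<times> nat) measure \<Rightarrow> bool \<Rightarrow> nat \<Rightarrow> real" where
  "betaF F d l = (\<integral>w. obsY w * indicator (cellDZ F d l) w \<partial>F) / measure F (cellDZ F d l)"

definition sigma2F :: "(real \<times> bool \<times> nat) measure \<Rightarrow> bool \<Rightarrow> nat \<Rightarrow> real" where
  "sigma2F F d l = (\<integral>w. (obsY w - betaF F d l)\<^sup>2 * indicator (cellDZ F d l) w \<partial>F)
                     / measure F (cellDZ F d l)"

definition moment_bound :: "(real \<times> bool \<times> nat) measure \<Rightarrow> real \<Rightarrow> real \<Rightarrow> bool \<Rightarrow> nat \<Rightarrow> bool" where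
  "moment_bound F \<delta> \<zeta> d l \<longleftrightarrow>
     (\<integral>\<^sup>+ w. ennreal (\<bar>obsY w\<bar> powr (2 + \<delta>)) * indicator (cellDZ F d l) w \<partial>F)
       \<le> ennreal \<zeta> * emeasure F (cellDZ F d l)"

definition beta_vec :: "(real \<times> bool \<times> nat) measure \<Rightarrow> nat \<Rightarrow> real vec" where
  "beta_vec F K = vec (2 * (K + 1)) (\<lambda>r. if r < K + 1 then betaF F True r else betaF F False (r - (K + 1)))"

text \<open>R^n is represented by the functions nat => real vanishing from index n on
  (coordinates 0..n-1); the topology on it is the Euclidean one.\<close>
definition trunc_space :: "nat \<Rightarrow> (nat \<Rightarrow> real) set" where
  "trunc_space n = {x. \<forall>i\<ge>n. x i = 0}"

text \<open>Compactness and interior in R^n; the topology used is the product topology on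
  nat => real restricted to trunc_space n, which is the Euclidean topology of R^n.\<close>
definition eucl_compact :: "nat \<Rightarrow> (nat \<Rightarrow> real) set \<Rightarrow> bool" where
  "eucl_compact n S \<longleftrightarrow> S \<subseteq> trunc_space n \<and> compact S"

definition eucl_interior :: "nat \<Rightarrow> (nat \<Rightarrow> real) set \<Rightarrow> (nat \<Rightarrow> real) set" where
  "eucl_interior n S = {x. \<exists>U. openin (top_of_set (trunc_space n)) U \<and> x \<in> U \<and> U \<subseteq> S}"

definition inP ::
  "nat \<Rightarrow> nat \<Rightarrow> (nat \<Rightarrow> real \<Rightarrow> real) \<Rightarrow> real \<Rightarrow> real \<Rightarrow> real \<Rightarrow> (nat \<Rightarrow> real) set
    \<Rightarrow> (nat \<Rightarrow> real) \<Rightarrow> (real \<times> bool \<times> nat) measure \<Rightarrow> bool" where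
  "inP K M h \<delta> \<zeta> \<epsilon> \<Theta> \<theta> F \<longleftrightarrow>
     prob_space F \<and>
     sets F = sets (borel \<Otimes>\<^sub>M count_space UNIV \<Otimes>\<^sub>M count_space UNIV) \<and>
     measure F {w \<in> space F. obsZ w \<le> K} = 1 \<and>
     K \<ge> M \<and>
     \<theta> \<in> eucl_interior (2 * (M + 1)) \<Theta> \<and>
     Amat h K M (pF F) *\<^sub>v vec (2 * (M + 1)) \<theta> = beta_vec F K \<and>
     (\<forall>d l. l \<le> K \<longrightarrow> moment_bound F \<delta> \<zeta> d l) \<and>
     (\<forall>l\<le>K. \<epsilon> \<le> pF F l \<and> pF F l \<le> 1 - \<epsilon>) \<and>
     (\<forall>l\<le>K. \<epsilon> \<le> qF F l \<and> qF F l \<le> 1 - \<epsilon>) \<and>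
     (\<forall>d l. l \<le> K \<longrightarrow> sigma2F F d l \<ge> \<epsilon>)"

definition inPs ::
  "nat \<Rightarrow> nat \<Rightarrow> (nat \<Rightarrow> real \<Rightarrow> real) \<Rightarrow> real \<Rightarrow> real \<Rightarrow> real \<Rightarrow> (nat \<Rightarrow> real) set
    \<Rightarrow> (nat \<Rightarrow> real) \<Rightarrow> (real \<times> bool \<times> nat) measure \<Rightarrow> bool" where
  "inPs K M h \<delta> \<zeta> \<epsilon> \<Theta> \<theta> F \<longleftrightarrow>
     inP K M h \<delta> \<zeta> \<epsilon> \<Theta> \<theta> F \<and>
     unisolvent (lam h True) (M + 1) {0<..<1} \<and>
     unisolvent (lam h False) (M + 1) {0<..<1} \<and>
     (\<exists>S \<subseteq> {..K}. card S = M + 1 \<and>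
        (\<forall>j\<in>S. \<forall>k\<in>S. j \<noteq> k \<longrightarrow> \<bar>pF F j - pF F k\<bar> \<ge> \<epsilon>))"

end

theory Submission
  imports Defs "Jordan_Normal_Form.Spectral_Radius"
begin

(* The smallest singular value of A is the square root of the least eigenvalue of A^T A, so it
   suffices to show |A v|^2 >= c |v|^2 with c > 0 independent of (theta, F). Each diagonal block
   of A(p) contains, on the M + 1 rows indexed by S, the collocation matrix of the unisolvent
   family lambda_d0, ..., lambda_dM at epsilon-separated points of [epsilon, 1 - epsilon].
   These point configurations form a compact set on which the collocation determinant is
   continuous and nonzero; since det(T)^2 |u|^2 <= |adj T|^2 |T u|^2, a positive minimum of
   det(T)^2 / (1 + |adj T|^2) over that set is a uniform lower bound for |T u|^2 / |u|^2. *)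

definition separated_on :: "real \<Rightarrow> 'a set \<Rightarrow> ('a \<Rightarrow> real) \<Rightarrow> bool" where
  "separated_on e S x \<longleftrightarrow> (\<forall>j\<in>S. \<forall>k\<in>S. j \<noteq> k \<longrightarrow> e \<le> \<bar>x j - x k\<bar>)"

lemma separated_on_inj_on: "0 < e \<Longrightarrow> separated_on e S x \<Longrightarrow> inj_on x S"
  unfolding separated_on_def inj_on_def by (metis abs_zero diff_self not_le)

lemma separated_on_comp:
  "separated_on e S p \<Longrightarrow> inj_on s T \<Longrightarrow> s ` T \<subseteq> S \<Longrightarrow> separated_on e T (p \<circ> s)"
  unfolding separated_on_def inj_on_def by (simp add: image_subset_iff) blast

lemma closed_separated_on: "closed {x::nat \<Rightarrow> real. separated_on e {..<n} x}"
proof -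
  have "{x::nat \<Rightarrow> real. separated_on e {..<n} x}
      = (\<Inter>j<n. \<Inter>k\<in>{..<n} - {j}. {x. e \<le> \<bar>x j - x k\<bar>})"
    unfolding separated_on_def by auto
  then show ?thesis
    by (simp only:) (intro closed_INT ballI closed_Collect_le continuous_intros
        continuous_on_product_coordinates)
qed

lemma compact_truncated_box:
  "compact {x::nat \<Rightarrow> real. (\<forall>j<n. x j \<in> {a..b}) \<and> (\<forall>j\<ge>n. x j = 0)}"
proof -
  have "{x::nat \<Rightarrow> real. (\<forall>j<n. x j \<in> {a..b}) \<and> (\<forall>j\<ge>n. x j = 0)}
      = PiE UNIV (\<lambda>j. if j < n then {a..b} else {0})"
    unfolding PiE_def Pi_def extensional_def by (auto simp: not_less)
  moreover have "compactin (product_topology (\<lambda>i. euclidean) UNIV)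
      (PiE UNIV (\<lambda>j. if j < n then {a..b::real} else {0}))"
    by (subst compactin_PiE) auto
  ultimately show ?thesis
    by (simp add: euclidean_product_topology)
qed

lemma compact_continuous_pos_lower_bound:
  fixes \<phi> :: "'a::topological_space \<Rightarrow> real"
  assumes "compact X" "continuous_on X \<phi>" "\<And>x. x \<in> X \<Longrightarrow> 0 < \<phi> x"
  shows "\<exists>c>0. \<forall>x\<in>X. c \<le> \<phi> x"
proof (cases "X = {}")
  case False
  then obtain x0 where "x0 \<in> X" "\<forall>x\<in>X. \<phi> x0 \<le> \<phi> x"
    using continuous_attains_inf[OF assms(1) False assms(2)] by blast
  then show ?thesis
    using assms(3) by blast
qed (intro exI[of _ 1], simp)

lemma continuous_on_det_mat:
  fixes G :: "'a::topological_space \<Rightarrow> nat \<Rightarrow> nat \<Rightarrow> real"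
  assumes "\<And>i j. i < n \<Longrightarrow> j < n \<Longrightarrow> continuous_on X (\<lambda>x. G x i j)"
  shows "continuous_on X (\<lambda>x. det (mat n n (\<lambda>(i, j). G x i j)))"
proof -
  have expand: "det (mat n n (\<lambda>(i, j). G x i j))
      = (\<Sum>p\<in>{p. p permutes {0..<n}}. signof p * (\<Prod>i=0..<n. G x i (p i)))" for x
    unfolding det_def by (auto intro!: sum.cong prod.cong simp: permutes_in_image)
  show ?thesis
    unfolding expand by (intro continuous_intros assms, auto simp: permutes_in_image)
qed

lemma continuous_on_adj_mat_entry:
  fixes G :: "'a::topological_space \<Rightarrow> nat \<Rightarrow> nat \<Rightarrow> real"
  assumes "\<And>i j. i < n \<Longrightarrow> j < n \<Longrightarrow> continuous_on X (\<lambda>x. G x i j)"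
    and "a < n" "b < n"
  shows "continuous_on X (\<lambda>x. adj_mat (mat n n (\<lambda>(i, j). G x i j)) $$ (a, b))"
proof -
  have expand: "adj_mat (mat n n (\<lambda>(i, j). G x i j)) $$ (a, b) = (-1) ^ (b + a) *
      det (mat (n - 1) (n - 1)
        (\<lambda>(i, j). G x (if i < b then i else Suc i) (if j < a then j else Suc j)))" for x
    using assms(2,3) unfolding adj_mat_def cofactor_def mat_delete_def
    by (auto intro!: arg_cong[where f = det])
  show ?thesis
    unfolding expand by (intro continuous_intros continuous_on_det_mat assms, auto)
qed

lemma det_sq_mult_norm_le_adj_mat:
  fixes T :: "real mat"
  assumes T: "T \<in> carrier_mat n n"
  shows "(det T)^2 * (\<Sum>i<n. (u i)^2)
    \<le> (\<Sum>i<n. \<Sum>j<n. (adj_mat T $$ (i, j))^2) * (\<Sum>j<n. ((T *\<^sub>v vec n u) $ j)^2)"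
proof -
  let ?w = "T *\<^sub>v vec n u"
  have adj: "adj_mat T \<in> carrier_mat n n"
    using adj_mat(1)[OF T] .
  have "adj_mat T *\<^sub>v ?w = (adj_mat T * T) *\<^sub>v vec n u"
    using T adj by (simp add: assoc_mult_mat_vec)
  also have "\<dots> = det T \<cdot>\<^sub>v vec n u"
    unfolding adj_mat(3)[OF T] by (rule eq_vecI) (auto simp: row_smult)
  finally have adj_w: "adj_mat T *\<^sub>v ?w = det T \<cdot>\<^sub>v vec n u" .
  have "det T * u i = (\<Sum>j<n. adj_mat T $$ (i, j) * ?w $ j)" if "i < n" for i
  proof -
    have "(adj_mat T *\<^sub>v ?w) $ i = (det T \<cdot>\<^sub>v vec n u) $ i"
      using adj_w by simp
    then show ?thesis
      using that T adj by (auto simp: scalar_prod_def row_def lessThan_atLeast0)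
  qed
  then have Cauchy_Schwarz: "(det T * u i)^2
      \<le> (\<Sum>j<n. (adj_mat T $$ (i, j))^2) * (\<Sum>j<n. (?w $ j)^2)" if "i < n" for i
    using that by (simp add: Cauchy_Schwarz_ineq_sum)
  have "(det T)^2 * (\<Sum>i<n. (u i)^2) = (\<Sum>i<n. (det T * u i)^2)"
    by (simp add: sum_distrib_left power_mult_distrib)
  also have "\<dots> \<le> (\<Sum>i<n. (\<Sum>j<n. (adj_mat T $$ (i, j))^2) * (\<Sum>j<n. (?w $ j)^2))"
    using Cauchy_Schwarz by (intro sum_mono) auto
  also have "\<dots> = (\<Sum>i<n. \<Sum>j<n. (adj_mat T $$ (i, j))^2) * (\<Sum>j<n. (?w $ j)^2)"
    by (simp add: sum_distrib_right)
  finally show ?thesis .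
qed

lemma mult_sum_squares_le_mono:
  fixes c c' :: real
  shows "c' \<le> c \<Longrightarrow> c * (\<Sum>i\<in>I. (u i)^2) \<le> y \<Longrightarrow> c' * (\<Sum>i\<in>I. (u i)^2) \<le> y"
  by (meson mult_right_mono order_trans sum_nonneg zero_le_power2)

definition det_adj_ratio :: "real mat \<Rightarrow> real" where
  "det_adj_ratio T =
    (det T)^2 / (1 + (\<Sum>i<dim_row T. \<Sum>j<dim_col T. (adj_mat T $$ (i, j))^2))"

lemma det_adj_ratio_pos:
  "T \<in> carrier_mat n n \<Longrightarrow> det T \<noteq> 0 \<Longrightarrow> 0 < det_adj_ratio T"
  unfolding det_adj_ratio_def by (intro divide_pos_pos add_pos_nonneg sum_nonneg) auto

lemma det_adj_ratio_mult_norm_le: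
  fixes T :: "real mat"
  assumes T: "T \<in> carrier_mat n n"
  shows "det_adj_ratio T * (\<Sum>i<n. (u i)^2) \<le> (\<Sum>j<n. ((T *\<^sub>v vec n u) $ j)^2)"
proof -
  define Q where "Q = (\<Sum>i<n. \<Sum>j<n. (adj_mat T $$ (i, j))^2)"
  have "0 \<le> Q"
    unfolding Q_def by (intro sum_nonneg) auto
  have "(det T)^2 * (\<Sum>i<n. (u i)^2) \<le> Q * (\<Sum>j<n. ((T *\<^sub>v vec n u) $ j)^2)"
    unfolding Q_def by (rule det_sq_mult_norm_le_adj_mat[OF T])
  also have "\<dots> \<le> (1 + Q) * (\<Sum>j<n. ((T *\<^sub>v vec n u) $ j)^2)"
    by (intro mult_right_mono sum_nonneg) auto
  finally show ?thesis
    using T \<open>0 \<le> Q\<close> unfolding det_adj_ratio_def Q_def by (simp add: field_simps)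
qed

lemma continuous_on_det_adj_ratio:
  fixes G :: "'a::topological_space \<Rightarrow> nat \<Rightarrow> nat \<Rightarrow> real"
  assumes "\<And>i j. i < n \<Longrightarrow> j < n \<Longrightarrow> continuous_on X (\<lambda>x. G x i j)"
  shows "continuous_on X (\<lambda>x. det_adj_ratio (mat n n (\<lambda>(i, j). G x i j)))"
proof -
  have "0 \<le> (\<Sum>i<n. \<Sum>j<n. (adj_mat (mat n n (\<lambda>(i, j). G x i j)) $$ (i, j))^2)" for x
    by (intro sum_nonneg) auto
  then show ?thesis
    unfolding det_adj_ratio_def
    by (simp, intro continuous_intros continuous_on_det_mat continuous_on_adj_mat_entry assms)
      (auto simp: add_nonneg_eq_0_iff)
qed

lemma collocation_lower_bound:
  fixes f :: "nat \<Rightarrow> real \<Rightarrow> real"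
  assumes cont: "\<And>i. i < n \<Longrightarrow> continuous_on {a..b} (f i)"
    and det_nonzero: "\<And>x. \<forall>j<n. x j \<in> {a..b} \<Longrightarrow> separated_on e {..<n} x
      \<Longrightarrow> det (mat n n (\<lambda>(i, j). f i (x j))) \<noteq> 0"
  shows "\<exists>c>0. \<forall>x u. (\<forall>j<n. x j \<in> {a..b}) \<longrightarrow> separated_on e {..<n} x \<longrightarrow>
      c * (\<Sum>i<n. (u i)^2) \<le> (\<Sum>j<n. (\<Sum>i<n. f i (x j) * u i)^2)"
proof -
  txt \<open>Padding the points with zeros makes the set of configurations compact in the product space.\<close>
  define X where "X = {x::nat \<Rightarrow> real. (\<forall>j<n. x j \<in> {a..b}) \<and> (\<forall>j\<ge>n. x j = 0)}
      \<inter> {x. separated_on e {..<n} x}"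
  define T where "T x = mat n n (\<lambda>(j, i). f i (x j))" for x :: "nat \<Rightarrow> real"
  have "compact X"
    unfolding X_def by (intro compact_Int_closed compact_truncated_box closed_separated_on)
  moreover have "continuous_on X (\<lambda>x. det_adj_ratio (T x))"
    unfolding T_def
  proof (rule continuous_on_det_adj_ratio)
    fix j i assume "j < n" "i < n"
    then show "continuous_on X (\<lambda>x. f i (x j))"
      by (intro continuous_on_compose2[OF cont[OF \<open>i < n\<close>]])
        (auto simp: X_def intro: continuous_on_subset[OF continuous_on_product_coordinates])
  qed
  moreover have "0 < det_adj_ratio (T x)" if "x \<in> X" for x
  proof (rule det_adj_ratio_pos)
    show "T x \<in> carrier_mat n n"
      unfolding T_def by simp
    have "det (T x) = det (mat n n (\<lambda>(i, j). f i (x j)))"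
      unfolding T_def by (subst det_transpose[symmetric]) (auto intro!: arg_cong[where f = det])
    also have "\<dots> \<noteq> 0"
      using that by (intro det_nonzero) (auto simp: X_def)
    finally show "det (T x) \<noteq> 0" .
  qed
  ultimately obtain c where "c > 0" and c: "\<forall>x\<in>X. c \<le> det_adj_ratio (T x)"
    using compact_continuous_pos_lower_bound by blast
  show ?thesis
  proof (intro exI[of _ c] conjI allI impI)
    fix x :: "nat \<Rightarrow> real" and u
    assume "\<forall>j<n. x j \<in> {a..b}" "separated_on e {..<n} x"
    define x' where "x' j = (if j < n then x j else 0)" for j
    have "x' \<in> X"
      using \<open>\<forall>j<n. x j \<in> {a..b}\<close> \<open>separated_on e {..<n} x\<close>
      unfolding X_def x'_def separated_on_def by auto
    moreover have "T x' = T x"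
      unfolding T_def x'_def by (intro cong_mat) auto
    ultimately have "c \<le> det_adj_ratio (T x)"
      using c by auto
    moreover have "(T x *\<^sub>v vec n u) $ j = (\<Sum>i<n. f i (x j) * u i)" if "j < n" for j
      using that unfolding T_def
      by (auto simp: scalar_prod_def row_def lessThan_atLeast0 intro!: sum.cong)
    then have "det_adj_ratio (T x) * (\<Sum>i<n. (u i)^2) \<le> (\<Sum>j<n. (\<Sum>i<n. f i (x j) * u i)^2)"
      using det_adj_ratio_mult_norm_le[of "T x" n u] unfolding T_def by simp
    ultimately show "c * (\<Sum>i<n. (u i)^2) \<le> (\<Sum>j<n. (\<Sum>i<n. f i (x j) * u i)^2)"
      by (rule mult_sum_squares_le_mono)
  qed (rule \<open>c > 0\<close>)
qed

lemma collocation_lower_bound_reindex: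
  fixes f :: "nat \<Rightarrow> real \<Rightarrow> real" and p :: "'a \<Rightarrow> real"
  assumes bound: "\<forall>x u. (\<forall>j<n. x j \<in> A) \<longrightarrow> separated_on e {..<n} x \<longrightarrow>
      c * (\<Sum>i<n. (u i)^2) \<le> (\<Sum>j<n. (\<Sum>i<n. f i (x j) * u i)^2)"
    and "finite I" "S \<subseteq> I" "card S = n" "\<forall>l\<in>S. p l \<in> A" "separated_on e S p"
  shows "c * (\<Sum>i<n. (u i)^2) \<le> (\<Sum>r\<in>I. (\<Sum>i<n. f i (p r) * u i)^2)"
proof -
  obtain s where s: "bij_betw s {..<n} S"
    using ex_bij_betw_nat_finite[of S] finite_subset[OF assms(3,2)] assms(4)
    by (auto simp: lessThan_atLeast0)
  then have "\<forall>j<n. (p \<circ> s) j \<in> A" "separated_on e {..<n} (p \<circ> s)"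
    using assms(5) separated_on_comp[OF assms(6)] by (auto simp: bij_betw_def)
  then have "c * (\<Sum>i<n. (u i)^2) \<le> (\<Sum>j<n. (\<Sum>i<n. f i (p (s j)) * u i)^2)"
    using bound by (simp add: comp_def)
  also have "\<dots> = (\<Sum>r\<in>S. (\<Sum>i<n. f i (p r) * u i)^2)"
    using sum.reindex_bij_betw[OF s, of "\<lambda>r. (\<Sum>i<n. f i (p r) * u i)^2"] by simp
  also have "\<dots> \<le> (\<Sum>r\<in>I. (\<Sum>i<n. f i (p r) * u i)^2)"
    using assms(2,3) by (intro sum_mono2) auto
  finally show ?thesis .
qed

lemma real_symmetric_mat_eigenvalue_real:
  fixes B :: "real mat"
  assumes B: "B \<in> carrier_mat m m"
    and sym: "\<And>i j. i < m \<Longrightarrow> j < m \<Longrightarrow> B $$ (i, j) = B $$ (j, i)"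
    and v: "v \<in> carrier_vec m" "v \<noteq> 0\<^sub>v m" "map_mat complex_of_real B *\<^sub>v v = l \<cdot>\<^sub>v v"
  shows "l \<in> \<real>"
proof -
  txt \<open>l is the Rayleigh quotient s / N, and s is real because B is symmetric.\<close>
  define s where "s = (\<Sum>i<m. cnj (v $ i) * (map_mat complex_of_real B *\<^sub>v v) $ i)"
  define N where "N = (\<Sum>i<m. (cmod (v $ i))^2)"
  have s_double_sum: "s = (\<Sum>i<m. \<Sum>j<m. cnj (v $ i) * of_real (B $$ (i, j)) * v $ j)"
    unfolding s_def using B v(1)
    by (intro sum.cong refl)
      (auto simp: scalar_prod_def row_def lessThan_atLeast0 sum_distrib_left mult.assoc)
  have "cnj s = (\<Sum>i<m. \<Sum>j<m. v $ i * of_real (B $$ (i, j)) * cnj (v $ j))"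
    unfolding s_double_sum by simp
  also have "\<dots> = (\<Sum>j<m. \<Sum>i<m. v $ i * of_real (B $$ (i, j)) * cnj (v $ j))"
    by (rule sum.swap)
  also have "\<dots> = s"
    unfolding s_double_sum by (intro sum.cong refl) (auto simp: sym mult.commute mult.left_commute)
  finally have s_real: "cnj s = s" .
  have N_eq: "(\<Sum>i<m. cnj (v $ i) * v $ i) = of_real N"
    unfolding N_def of_real_sum
    by (intro sum.cong refl) (metis complex_norm_square mult.commute of_real_power)
  have s_eq: "s = l * of_real N"
    unfolding s_def v(3) N_eq[symmetric] using v(1) by (auto simp: sum_distrib_left intro!: sum.cong)
  have "N > 0"
  proof -
    obtain i where "i < m" "v $ i \<noteq> 0"
      using v(1,2) by (metis carrier_vecD eq_vecI index_zero_vec(1,2))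
    then have "0 < (cmod (v $ i))^2" "(cmod (v $ i))^2 \<le> N"
      unfolding N_def by (auto intro: member_le_sum)
    then show ?thesis
      by linarith
  qed
  then have "l = s / of_real N"
    using s_eq by (simp add: field_simps)
  then have "cnj l = l"
    using s_real by simp
  then show ?thesis
    using Reals_cnj_iff by blast
qed

lemma real_symmetric_mat_has_eigenvalue:
  fixes B :: "real mat"
  assumes B: "B \<in> carrier_mat m m" and m: "m > 0"
    and sym: "\<And>i j. i < m \<Longrightarrow> j < m \<Longrightarrow> B $$ (i, j) = B $$ (j, i)"
  shows "\<exists>k. eigenvalue B k"
proof -
  let ?Bc = "map_mat complex_of_real B"
  have Bc: "?Bc \<in> carrier_mat m m"
    using B by simp
  obtain l where "eigenvalue ?Bc l"
    using spectrum_non_empty[OF Bc m] unfolding spectrum_def by auto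
  moreover obtain r where "l = of_real r"
  proof -
    obtain v where "v \<in> carrier_vec m" "v \<noteq> 0\<^sub>v m" "?Bc *\<^sub>v v = l \<cdot>\<^sub>v v"
      using \<open>eigenvalue ?Bc l\<close> Bc unfolding eigenvalue_def eigenvector_def by auto
    then show ?thesis
      using real_symmetric_mat_eigenvalue_real[OF B sym] that by (blast elim: Reals_cases)
  qed
  ultimately have "poly (char_poly ?Bc) (of_real r) = 0"
    using eigenvalue_root_char_poly[OF Bc] by simp
  then have "poly (char_poly B) r = 0"
    unfolding of_real_hom.char_poly_hom[OF B] by simp
  then show ?thesis
    using eigenvalue_root_char_poly[OF B] by auto
qed

lemma eigenvalue_gram_mat_lower_bound:
  fixes A :: "real mat"
  assumes A: "A \<in> carrier_mat r m"
    and k: "eigenvalue (transpose_mat A * A) k"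
    and bound: "\<And>v. v \<in> carrier_vec m \<Longrightarrow> c * (v \<bullet> v) \<le> (A *\<^sub>v v) \<bullet> (A *\<^sub>v v)"
  shows "c \<le> k"
proof -
  have B: "transpose_mat A * A \<in> carrier_mat m m"
    using A by auto
  obtain v where v: "v \<in> carrier_vec m" "v \<noteq> 0\<^sub>v m" "(transpose_mat A * A) *\<^sub>v v = k \<cdot>\<^sub>v v"
    using k B unfolding eigenvalue_def eigenvector_def by (auto simp del: carrier_matD)
  have "(A *\<^sub>v v) \<bullet> (A *\<^sub>v v) = (transpose_mat A *\<^sub>v (A *\<^sub>v v)) \<bullet> v"
    using transpose_vec_mult_scalar[OF A v(1), of "A *\<^sub>v v"] A v(1) by auto
  also have "\<dots> = ((transpose_mat A * A) *\<^sub>v v) \<bullet> v"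
    using A v(1) by (simp add: assoc_mult_mat_vec)
  also have "\<dots> = k * (v \<bullet> v)"
    using v by simp
  finally have "c * (v \<bullet> v) \<le> k * (v \<bullet> v)"
    using bound[OF v(1)] by simp
  moreover have "v \<bullet> v > 0"
    using conjugate_square_greater_0_vec[OF v(1)] v(2) by simp
  ultimately show ?thesis
    by simp
qed

lemma sing_min_lower_bound:
  fixes A :: "real mat"
  assumes A: "A \<in> carrier_mat r m" and "m > 0"
    and bound: "\<And>v. v \<in> carrier_vec m \<Longrightarrow> c * (v \<bullet> v) \<le> (A *\<^sub>v v) \<bullet> (A *\<^sub>v v)"
  shows "sqrt c \<le> sing_min A"
proof -
  let ?B = "transpose_mat A * A"
  have B: "?B \<in> carrier_mat m m"
    using A by auto
  have "transpose_mat ?B = ?B"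
    using A by (simp add: transpose_mult)
  then have "?B $$ (i, j) = ?B $$ (j, i)" if "i < m" "j < m" for i j
    using that B by (metis index_transpose_mat(1) carrier_matD(1,2))
  then have "{k. eigenvalue ?B k} \<noteq> {}"
    using real_symmetric_mat_has_eigenvalue[OF B \<open>m > 0\<close>] by auto
  moreover have "finite {k. eigenvalue ?B k}"
    using card_finite_spectrum(1)[OF B] unfolding spectrum_def .
  moreover have "c \<le> k" if "eigenvalue ?B k" for k
    using eigenvalue_gram_mat_lower_bound[OF A that bound] .
  ultimately show ?thesis
    unfolding sing_min_def by simp
qed

lemma sum_lessThan_add_split:
  "(\<Sum>c<m + n. g c) = (\<Sum>c<m. g c) + (\<Sum>c<n. g (m + c :: nat))"
  by (induction n) (simp_all add: add.assoc)

lemma Amat_mult_vec_upper: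
  assumes "r < K + 1" "v \<in> carrier_vec (2 * (M + 1))"
  shows "(Amat h K M p *\<^sub>v v) $ r = (\<Sum>i<M+1. lam h True i (p r) * v $ i)"
proof -
  have "(Amat h K M p *\<^sub>v v) $ r = (\<Sum>c<(M+1)+(M+1). Amat h K M p $$ (r, c) * v $ c)"
    using assms unfolding Amat_def
    by (auto simp: scalar_prod_def row_def lessThan_atLeast0 mult_2 intro!: sum.cong)
  then show ?thesis
    unfolding sum_lessThan_add_split using assms(1) unfolding Amat_def by auto
qed

lemma Amat_mult_vec_lower:
  assumes "r < K + 1" "v \<in> carrier_vec (2 * (M + 1))"
  shows "(Amat h K M p *\<^sub>v v) $ (K + 1 + r) = (\<Sum>i<M+1. lam h False i (p r) * v $ (M + 1 + i))"
proof -
  have "(Amat h K M p *\<^sub>v v) $ (K + 1 + r) = (\<Sum>c<(M+1)+(M+1). Amat h K M p $$ (K+1+r, c) * v $ c)"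
    using assms unfolding Amat_def
    by (auto simp: scalar_prod_def row_def lessThan_atLeast0 mult_2 intro!: sum.cong)
  then show ?thesis
    unfolding sum_lessThan_add_split using assms(1) unfolding Amat_def by auto
qed

lemma Amat_mult_vec_sq_norm:
  assumes v: "v \<in> carrier_vec (2 * (M + 1))"
  shows "(Amat h K M p *\<^sub>v v) \<bullet> (Amat h K M p *\<^sub>v v)
    = (\<Sum>r<K+1. (\<Sum>i<M+1. lam h True i (p r) * v $ i)^2)
      + (\<Sum>r<K+1. (\<Sum>i<M+1. lam h False i (p r) * v $ (M + 1 + i))^2)"
proof -
  let ?w = "Amat h K M p *\<^sub>v v"
  have "?w \<bullet> ?w = (\<Sum>r<(K+1)+(K+1). (?w $ r)^2)"
    using v unfolding Amat_def
    by (auto simp: scalar_prod_def lessThan_atLeast0 mult_2 power2_eq_square)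
  then show ?thesis
    unfolding sum_lessThan_add_split using Amat_mult_vec_upper[OF _ v] Amat_mult_vec_lower[OF _ v]
    by simp
qed

lemma sing_min_Amat_lower_bound:
  assumes "\<And>d u. c * (\<Sum>i<M+1. (u i)^2) \<le> (\<Sum>r<K+1. (\<Sum>i<M+1. lam h d i (p r) * u i)^2)"
  shows "sqrt c \<le> sing_min (Amat h K M p)"
proof (rule sing_min_lower_bound)
  show "Amat h K M p \<in> carrier_mat (2 * (K + 1)) (2 * (M + 1))"
    unfolding Amat_def by simp
  fix v :: "real vec"
  assume v: "v \<in> carrier_vec (2 * (M + 1))"
  have vv: "v \<bullet> v = (\<Sum>i<(M+1)+(M+1). (v $ i)^2)"
    using v by (auto simp: scalar_prod_def lessThan_atLeast0 mult_2 power2_eq_square)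
  show "c * (v \<bullet> v) \<le> (Amat h K M p *\<^sub>v v) \<bullet> (Amat h K M p *\<^sub>v v)"
    unfolding vv sum_lessThan_add_split[of _ "M + 1" "M + 1"] Amat_mult_vec_sq_norm[OF v] distrib_left
    by (intro add_mono assms)
qed simp

lemma continuous_on_lam:
  assumes "\<And>m. m \<in> {1..M} \<Longrightarrow> h m integrable_on {0..1}"
    and "0 < \<epsilon>" "\<epsilon> < 1/2" "i < M + 1"
  shows "continuous_on {\<epsilon>..1-\<epsilon>} (lam h d i)"
proof (cases "i = 0")
  case False
  then have integrable: "h i integrable_on {0..1}"
    using assms(1,4) by auto
  have sub: "{\<epsilon>..1-\<epsilon>} \<subseteq> {0..1}"
    using assms(2,3) by auto
  show ?thesis
  proof (cases d)
    case True
    then have "lam h d i = (\<lambda>p. (1 / p) * integral {0..p} (h i))"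
      using False unfolding lam_def by auto
    moreover have "continuous_on {\<epsilon>..1-\<epsilon>} (\<lambda>p. integral {0..p} (h i))"
      by (rule continuous_on_subset[OF indefinite_integral_continuous_1[OF integrable] sub])
    ultimately show ?thesis
      using assms(2,3) by (simp only:) (intro continuous_intros; auto)
  next
    case False': False
    then have "lam h d i = (\<lambda>p. (1 / (1 - p)) * integral {p..1} (h i))"
      using False unfolding lam_def by auto
    moreover have "continuous_on {\<epsilon>..1-\<epsilon>} (\<lambda>p. integral {p..1} (h i))"
      by (rule continuous_on_subset[OF indefinite_integral_continuous_1'[OF integrable] sub])
    ultimately show ?thesis
      using assms(2,3) by (simp only:) (intro continuous_intros; auto)
  qed
qed (simp add: lam_def)

lemma lam_collocation_lower_bound:
  fixes K :: nat
  assumes integrable: "\<And>m. m \<in> {1..M} \<Longrightarrow> h m integrable_on {0..1}"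
    and "0 < \<epsilon>" "\<epsilon> < 1/2"
    and unisolvent: "unisolvent (lam h d) (M + 1) {0<..<1}"
  shows "\<exists>c>0. \<forall>p S u. S \<subseteq> {..K} \<longrightarrow> card S = M + 1 \<longrightarrow> (\<forall>l\<le>K. p l \<in> {\<epsilon>..1-\<epsilon>})
    \<longrightarrow> separated_on \<epsilon> S p
    \<longrightarrow> c * (\<Sum>i<M+1. (u i)^2) \<le> (\<Sum>r<K+1. (\<Sum>i<M+1. lam h d i (p r) * u i)^2)"
proof -
  have "det (mat (M+1) (M+1) (\<lambda>(i, j). lam h d i (x j))) \<noteq> 0"
    if "\<forall>j<M+1. x j \<in> {\<epsilon>..1-\<epsilon>}" "separated_on \<epsilon> {..<M+1} x" for x
  proof -
    have "\<forall>j<M+1. x j \<in> {0<..<1}"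
      using that(1) \<open>0 < \<epsilon>\<close> by auto
    moreover have "inj_on x {..<M+1}"
      using separated_on_inj_on[OF \<open>0 < \<epsilon>\<close> that(2)] .
    ultimately show ?thesis
      using unisolvent unfolding unisolvent_def by blast
  qed
  then obtain c where "c > 0" and c: "\<forall>x u. (\<forall>j<M+1. x j \<in> {\<epsilon>..1-\<epsilon>})
      \<longrightarrow> separated_on \<epsilon> {..<M+1} x
      \<longrightarrow> c * (\<Sum>i<M+1. (u i)^2) \<le> (\<Sum>j<M+1. (\<Sum>i<M+1. lam h d i (x j) * u i)^2)"
    using collocation_lower_bound[of "M + 1" \<epsilon> "1 - \<epsilon>" "lam h d"]
      continuous_on_lam[of M h, OF integrable \<open>0 < \<epsilon>\<close> \<open>\<epsilon> < 1/2\<close>] by blast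
  show ?thesis
  proof (intro exI[of _ c] conjI allI impI)
    fix p S u
    assume "S \<subseteq> {..K}" "card S = M + 1" "\<forall>l\<le>K. p l \<in> {\<epsilon>..1-\<epsilon>}" "separated_on \<epsilon> S p"
    then show "c * (\<Sum>i<M+1. (u i)^2) \<le> (\<Sum>r<K+1. (\<Sum>i<M+1. lam h d i (p r) * u i)^2)"
      by (intro collocation_lower_bound_reindex[OF c]) auto
  qed (rule \<open>c > 0\<close>)
qed

lemma sing_min_Amat_uniform_lower_bound:
  assumes integrable: "\<And>m. m \<in> {1..M} \<Longrightarrow> h m integrable_on {0..1}"
    and \<epsilon>: "0 < \<epsilon>" "\<epsilon> < 1/2"
    and unisolvent: "\<And>d. unisolvent (lam h d) (M + 1) {0<..<1}"
  shows "\<exists>c>0. \<forall>p S. S \<subseteq> {..K} \<longrightarrow> card S = M + 1 \<longrightarrow> (\<forall>l\<le>K. p l \<in> {\<epsilon>..1-\<epsilon>})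
    \<longrightarrow> separated_on \<epsilon> S p \<longrightarrow> c \<le> sing_min (Amat h K M p)"
proof -
  obtain c1 where "c1 > 0" and c1: "\<forall>p S u. S \<subseteq> {..K} \<longrightarrow> card S = M + 1
      \<longrightarrow> (\<forall>l\<le>K. p l \<in> {\<epsilon>..1-\<epsilon>}) \<longrightarrow> separated_on \<epsilon> S p
      \<longrightarrow> c1 * (\<Sum>i<M+1. (u i)^2) \<le> (\<Sum>r<K+1. (\<Sum>i<M+1. lam h True i (p r) * u i)^2)"
    using lam_collocation_lower_bound[of M h, OF integrable \<epsilon> unisolvent] by blast
  obtain c0 where "c0 > 0" and c0: "\<forall>p S u. S \<subseteq> {..K} \<longrightarrow> card S = M + 1
      \<longrightarrow> (\<forall>l\<le>K. p l \<in> {\<epsilon>..1-\<epsilon>}) \<longrightarrow> separated_on \<epsilon> S p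
      \<longrightarrow> c0 * (\<Sum>i<M+1. (u i)^2) \<le> (\<Sum>r<K+1. (\<Sum>i<M+1. lam h False i (p r) * u i)^2)"
    using lam_collocation_lower_bound[of M h, OF integrable \<epsilon> unisolvent] by blast
  have "sqrt (min c1 c0) \<le> sing_min (Amat h K M p)"
    if "S \<subseteq> {..K}" "card S = M + 1" "\<forall>l\<le>K. p l \<in> {\<epsilon>..1-\<epsilon>}" "separated_on \<epsilon> S p"
    for p S
  proof (rule sing_min_Amat_lower_bound)
    fix d u
    show "min c1 c0 * (\<Sum>i<M+1. (u i)^2) \<le> (\<Sum>r<K+1. (\<Sum>i<M+1. lam h d i (p r) * u i)^2)"
    proof (cases d)
      case True
      then show ?thesis
        using c1 that by (intro mult_sum_squares_le_mono[OF min.cobounded1]) auto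
    next
      case False
      then show ?thesis
        using c0 that by (intro mult_sum_squares_le_mono[OF min.cobounded2]) auto
    qed
  qed
  then show ?thesis
    using \<open>c1 > 0\<close> \<open>c0 > 0\<close> by (intro exI[of _ "sqrt (min c1 c0)"]) auto
qed

theorem lemmaB1:
  fixes K M :: nat and h :: "nat \<Rightarrow> real \<Rightarrow> real"
    and \<delta> \<zeta> \<epsilon> :: real and \<Theta> :: "(nat \<Rightarrow> real) set"
  assumes "M \<ge> 1"
    and "\<And>m. m \<in> {1..M} \<Longrightarrow> continuous_on {0<..<1} (h m)"
    and "\<And>m. m \<in> {1..M} \<Longrightarrow> h m integrable_on {0..1}"
    and "\<delta> > 0" and "\<zeta> > 0" and "0 < \<epsilon>" and "\<epsilon> < 1 / 2"
    and "eucl_compact (2 * (M + 1)) \<Theta>"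
    and "eucl_interior (2 * (M + 1)) \<Theta> \<noteq> {}"
  shows "\<exists>c > 0. \<forall>\<theta> F. inPs K M h \<delta> \<zeta> \<epsilon> \<Theta> \<theta> F \<longrightarrow> c \<le> sing_min (Amat h K M (pF F))"
proof (cases "unisolvent (lam h True) (M + 1) {0<..<1} \<and> unisolvent (lam h False) (M + 1) {0<..<1}")
  case False
  then have "\<not> inPs K M h \<delta> \<zeta> \<epsilon> \<Theta> \<theta> F" for \<theta> F
    unfolding inPs_def by (intro notI, elim conjE) simp
  then show ?thesis
    by (intro exI[of _ 1]) simp
next
  case True
  then have "unisolvent (lam h d) (M + 1) {0<..<1}" for d
    by (cases d) auto
  then obtain c where "c > 0" and c: "\<forall>p S. S \<subseteq> {..K} \<longrightarrow> card S = M + 1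
      \<longrightarrow> (\<forall>l\<le>K. p l \<in> {\<epsilon>..1-\<epsilon>}) \<longrightarrow> separated_on \<epsilon> S p \<longrightarrow> c \<le> sing_min (Amat h K M p)"
    using sing_min_Amat_uniform_lower_bound[of M h, OF assms(3,6,7)] by blast
  have "c \<le> sing_min (Amat h K M (pF F))" if in_Ps: "inPs K M h \<delta> \<zeta> \<epsilon> \<Theta> \<theta> F" for \<theta> F
  proof -
    have "\<forall>l\<le>K. \<epsilon> \<le> pF F l \<and> pF F l \<le> 1 - \<epsilon>"
      using in_Ps unfolding inPs_def inP_def by simp
    moreover obtain S where "S \<subseteq> {..K}" "card S = M + 1" "separated_on \<epsilon> S (pF F)"
      using in_Ps unfolding inPs_def separated_on_def by (elim conjE exE) auto
    ultimately show ?thesis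
      using c[rule_format, of S "pF F"] by simp
  qed
  then show ?thesis
    using \<open>c > 0\<close> by auto
qed

end
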